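(* Let $t$ and $s$ be terms in the language of strong quasi-MV* algebras. Then $\mathbf{S^*}\models t\approx s$ if and only if $\mathbf{D^*}\models t\approx s$.
   Context: Terms in the language of strong quasi-MV* algebras are built from variables and constants $0,1$ using a binary operation $\oplus$ and unary operations $-,{}^+,{}^-$; $\mathbf{A}\models t\approx s$ means $t$ and $s$ take equal values under every assignment of variables in $\mathbf{A}$. $\mathbf{S^*}$ is the algebra with universe $S^*=[-1,1]\times[-1,1]\subseteq\mathbb{R}^2$ and operations $\langle a,b\rangle\oplus\langle c,d\rangle=\langle\max\{-1,\min\{1,a+c\}\},0\rangle$, $-\langle a,b\rangle=\langle -a,-b\rangle$, $\langle a,b\rangle^+=\langle\max\{0,a\},0\rangle$, $\langle a,b\rangle^-=\langle\min\{0,a\},0\rangle$, $0=\langle 0,0\rangle$, $1=\langle 1,0\rangle$. $\mathbf{D^*}$ is the subalgebra of $\mathbf{S^*}$ with universe $D^*=\{\langle a,b\rangle\in\mathbb{R}^2:a^2+b^2\le 1\}$. *)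

theory Defs
  imports Main "HOL.Real"
begin

datatype sqmv_term =
    Var nat
  | Zero
  | One
  | Oplus sqmv_term sqmv_term
  | Neg sqmv_term
  | Pos sqmv_term
  | NegPart sqmv_term

text \<open>Operations of S* (defined on all of real x real; S* and D* are obtained by
  restricting to the respective universes).\<close>
definition S_oplus :: "real \<times> real \<Rightarrow> real \<times> real \<Rightarrow> real \<times> real" where
  "S_oplus x y = (max (-1) (min 1 (fst x + fst y)), 0)"

definition S_neg :: "real \<times> real \<Rightarrow> real \<times> real" where
  "S_neg x = (- fst x, - snd x)"

definition S_pos :: "real \<times> real \<Rightarrow> real \<times> real" where
  "S_pos x = (max 0 (fst x), 0)"

definition S_negpart :: "real \<times> real \<Rightarrow> real \<times> real" where
  "S_negpart x = (min 0 (fst x), 0)"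

fun eval_S :: "(nat \<Rightarrow> real \<times> real) \<Rightarrow> sqmv_term \<Rightarrow> real \<times> real" where
  "eval_S v (Var i) = v i"
| "eval_S v Zero = (0, 0)"
| "eval_S v One = (1, 0)"
| "eval_S v (Oplus t u) = S_oplus (eval_S v t) (eval_S v u)"
| "eval_S v (Neg t) = S_neg (eval_S v t)"
| "eval_S v (Pos t) = S_pos (eval_S v t)"
| "eval_S v (NegPart t) = S_negpart (eval_S v t)"

definition Sstar :: "(real \<times> real) set" where
  "Sstar = {p. -1 \<le> fst p \<and> fst p \<le> 1 \<and> -1 \<le> snd p \<and> snd p \<le> 1}"

definition Dstar :: "(real \<times> real) set" where
  "Dstar = {p. (fst p)\<^sup>2 + (snd p)\<^sup>2 \<le> 1}"

definition models_eq :: "(real \<times> real) set \<Rightarrow> sqmv_term \<Rightarrow> sqmv_term \<Rightarrow> bool" where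
  "models_eq U t s \<longleftrightarrow> (\<forall>v. (\<forall>i. v i \<in> U) \<longrightarrow> eval_S v t = eval_S v s)"

end

theory Submission
  imports Defs
begin

text \<open>D* is a subalgebra of S*, so every identity of S* holds in D*. Conversely, the two
  coordinates of a term's value are computed independently: the first depends only on the
  first coordinates of the variables, the second only on their second coordinates. An
  assignment in S* therefore agrees coordinatewise with its projections onto the two axes,
  and these lie in D*.\<close>

lemma models_eq_subset:
  assumes "U \<subseteq> V" and "models_eq V t s"
  shows "models_eq U t s"
  using assms unfolding models_eq_def by blast

lemma fst_eval_S_cong:
  assumes "\<forall>i. fst (v i) = fst (w i)"
  shows "fst (eval_S v t) = fst (eval_S w t)"
  using assms by (induction t) (auto simp: S_oplus_def S_neg_def S_pos_def S_negpart_def)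

lemma snd_eval_S_cong:
  assumes "\<forall>i. snd (v i) = snd (w i)"
  shows "snd (eval_S v t) = snd (eval_S w t)"
  using assms by (induction t) (auto simp: S_oplus_def S_neg_def S_pos_def S_negpart_def)

lemma Dstar_subset_Sstar: "Dstar \<subseteq> Sstar"
proof
  fix p :: "real \<times> real"
  assume "p \<in> Dstar"
  then have "(fst p)\<^sup>2 + (snd p)\<^sup>2 \<le> 1"
    by (simp add: Dstar_def)
  then have "(fst p)\<^sup>2 \<le> 1" "(snd p)\<^sup>2 \<le> 1"
    using zero_le_power2[of "fst p"] zero_le_power2[of "snd p"] by linarith+
  then show "p \<in> Sstar"
    by (auto simp: Sstar_def abs_square_le_1 abs_le_iff)
qed

lemma fst_axis_in_Dstar: "p \<in> Sstar \<Longrightarrow> (fst p, 0) \<in> Dstar"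
  by (simp add: Sstar_def Dstar_def abs_square_le_1 abs_le_iff)

lemma snd_axis_in_Dstar: "p \<in> Sstar \<Longrightarrow> (0, snd p) \<in> Dstar"
  by (simp add: Sstar_def Dstar_def abs_square_le_1 abs_le_iff)

lemma models_eq_Dstar_imp_Sstar:
  assumes D: "models_eq Dstar t s"
  shows "models_eq Sstar t s"
  unfolding models_eq_def
proof (intro allI impI)
  fix v :: "nat \<Rightarrow> real \<times> real"
  assume v: "\<forall>i. v i \<in> Sstar"
  define v1 where "v1 i = (fst (v i), 0 :: real)" for i
  define v2 where "v2 i = (0 :: real, snd (v i))" for i
  have "eval_S v1 t = eval_S v1 s"
    using D v fst_axis_in_Dstar by (simp add: models_eq_def v1_def)
  then have "fst (eval_S v t) = fst (eval_S v s)"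
    using fst_eval_S_cong[of v v1] by (simp add: v1_def)
  moreover have "eval_S v2 t = eval_S v2 s"
    using D v snd_axis_in_Dstar by (simp add: models_eq_def v2_def)
  then have "snd (eval_S v t) = snd (eval_S v s)"
    using snd_eval_S_cong[of v v2] by (simp add: v2_def)
  ultimately show "eval_S v t = eval_S v s"
    by (simp add: prod_eq_iff)
qed

theorem proposition3p3:
  fixes t s :: sqmv_term
  shows "models_eq Sstar t s \<longleftrightarrow> models_eq Dstar t s"
  using models_eq_subset[OF Dstar_subset_Sstar] models_eq_Dstar_imp_Sstar by blast

end
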